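(* Let $F\subset\mathbb R^d$ be a closed set such that $\partial\operatorname{conv}F$ contains no rays. Then $\operatorname{cl}\operatorname{conv}F=\operatorname{conv}F$.
   Context: $\operatorname{conv}$ denotes convex hull and $\operatorname{cl}$ closure. A ray is a set $\{x+te: t\ge0\}$ with $x\in\mathbb R^d$, $e\ne0$. *)

theory Defs
  imports "HOL-Analysis.Analysis"
begin

definition is_ray :: "'a::real_vector set \<Rightarrow> bool" where
  "is_ray R \<longleftrightarrow> (\<exists>x e. e \<noteq> 0 \<and> R = {x + t *\<^sub>R e | t. t \<ge> 0})"

end

theory Submission
  imports Defs
begin

text \<open>Let x be a point of the closure of C = conv F outside C. Then x is not in the relative
interior, so a supporting hyperplane a \<bullet> y = a \<bullet> x of cl C passes through x. If some slab
cl C \<inter> {a \<bullet> y \<le> \<beta>} were unbounded, the closed convex set cl C would contain a ray from x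
inside the supporting hyperplane, hence inside the boundary of C. So all slabs are bounded,
and D = conv (F \<inter> {a \<bullet> y \<le> a \<bullet> x + 1}) is compact. A point c of C low in the slab is a
convex combination of a point of D and a point of C high above it, and the boundedness of the
slab forces c to lie within O(a \<bullet> c - a \<bullet> x) of D. Letting c tend to x gives x \<in> D \<subseteq> C.\<close>

lemma closed_convex_unbounded_contains_ray:
  fixes S :: "'a::euclidean_space set"
  assumes "closed S" "convex S" "\<not> bounded S" "x \<in> S"
  obtains e where "e \<noteq> 0" "\<And>t. t \<ge> 0 \<Longrightarrow> x + t *\<^sub>R e \<in> S"
proof -
  have "\<exists>y\<in>S. real n + 1 \<le> norm (y - x)" for n :: nat
    using assms(3) unfolding bounded_def by (metis dist_norm dist_commute not_le less_imp_le)
  then obtain y where yS: "\<And>n. y n \<in> S" and far: "\<And>n. real n + 1 \<le> norm (y n - x)"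
    by metis
  define u where "u n = (1 / norm (y n - x)) *\<^sub>R (y n - x)" for n
  have pos: "0 < norm (y n - x)" for n
    using far[of n] by linarith
  have "\<forall>n. u n \<in> sphere 0 1"
    using pos by (simp add: u_def)
  then obtain e r where e: "e \<in> sphere 0 1" and r: "strict_mono r" and lim: "(u \<circ> r) \<longlonglongrightarrow> e"
    using seq_compactE[OF compact_imp_seq_compact[OF compact_sphere]] by metis
  have segment: "x + t *\<^sub>R u n \<in> S" if "0 \<le> t" "t \<le> real n" for t n
  proof -
    have "0 \<le> t / norm (y n - x)" "t / norm (y n - x) \<le> 1"
      using that pos[of n] far[of n] by (auto simp: divide_simps)
    from convexD_alt[OF assms(2) assms(4) yS this]
    show ?thesis
      by (simp add: u_def algebra_simps)
  qed
  have "x + t *\<^sub>R e \<in> S" if "t \<ge> 0" for t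
  proof (rule Lim_in_closed_set[OF assms(1) _ trivial_limit_sequentially])
    show "((\<lambda>n. x + t *\<^sub>R (u \<circ> r) n) \<longlongrightarrow> x + t *\<^sub>R e) sequentially"
      by (intro tendsto_intros lim)
    obtain N :: nat where "t \<le> real N"
      using real_arch_simple by blast
    then show "\<forall>\<^sub>F n in sequentially. x + t *\<^sub>R (u \<circ> r) n \<in> S"
      using that seq_suble[OF r] segment
      by (intro eventually_sequentiallyI[of N]) (smt (verit) comp_apply of_nat_mono le_trans)
  qed
  moreover have "e \<noteq> 0"
    using e by auto
  ultimately show thesis
    using that by blast
qed

lemma supporting_hyperplane_contains_ray:
  fixes K :: "'a::euclidean_space set"
  assumes "closed K" "convex K" "x \<in> K"
    and support: "\<And>y. y \<in> K \<Longrightarrow> a \<bullet> x \<le> a \<bullet> y"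
    and "\<not> bounded (K \<inter> {y. a \<bullet> y \<le> \<beta>})"
  obtains e where "e \<noteq> 0" "a \<bullet> e = 0" "\<And>t. t \<ge> 0 \<Longrightarrow> x + t *\<^sub>R e \<in> K"
proof -
  let ?S = "K \<inter> {y. a \<bullet> y \<le> max \<beta> (a \<bullet> x)}"
  have "K \<inter> {y. a \<bullet> y \<le> \<beta>} \<subseteq> ?S"
    by auto
  then have "\<not> bounded ?S"
    using assms(5) bounded_subset by blast
  moreover have "closed ?S" "convex ?S" "x \<in> ?S"
    using assms(1-3) by (auto intro: closed_halfspace_le convex_Int convex_halfspace_le)
  ultimately obtain e where e: "e \<noteq> 0" and ray: "\<And>t. t \<ge> 0 \<Longrightarrow> x + t *\<^sub>R e \<in> ?S"
    using closed_convex_unbounded_contains_ray by metis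
  have "a \<bullet> e \<ge> 0"
    using support[of "x + e"] ray[of 1] by (simp add: inner_add_right)
  moreover have "a \<bullet> e \<le> 0"
  proof (rule ccontr)
    assume "\<not> a \<bullet> e \<le> 0"
    then have "a \<bullet> (x + ((max \<beta> (a \<bullet> x) - a \<bullet> x + 1) / (a \<bullet> e)) *\<^sub>R e) = max \<beta> (a \<bullet> x) + 1"
      by (simp add: inner_add_right)
    moreover have "(max \<beta> (a \<bullet> x) - a \<bullet> x + 1) / (a \<bullet> e) \<ge> 0"
      using \<open>\<not> a \<bullet> e \<le> 0\<close> by simp
    ultimately show False
      using ray by fastforce
  qed
  ultimately show thesis
    using that e ray by auto
qed

lemma not_in_interior_if_minimizes_inner:
  fixes S :: "'a::euclidean_space set"
  assumes "a \<noteq> 0" "\<And>y. y \<in> S \<Longrightarrow> a \<bullet> z \<le> a \<bullet> y"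
  shows "z \<notin> interior S"
proof
  assume "z \<in> interior S"
  also have "interior S \<subseteq> interior {y. a \<bullet> y \<ge> a \<bullet> z}"
    using assms(2) by (intro interior_mono) auto
  finally show False
    using assms(1) by simp
qed

lemma segment_point_near_lower_end:
  fixes K :: "'a::euclidean_space set"
  assumes "convex K" and above: "\<And>y. y \<in> K \<Longrightarrow> \<alpha> \<le> a \<bullet> y"
    and slab: "\<And>y. y \<in> K \<Longrightarrow> a \<bullet> y \<le> \<alpha> + 2 \<Longrightarrow> norm y \<le> R"
    and "q \<in> K" "p \<in> K" "a \<bullet> q \<le> \<alpha> + 1" "\<alpha> + 1 < a \<bullet> p"
    and "0 \<le> v" "v \<le> 1"
  shows "norm (((1 - v) *\<^sub>R q + v *\<^sub>R p) - q) \<le> 2 * R * (a \<bullet> ((1 - v) *\<^sub>R q + v *\<^sub>R p) - \<alpha>)"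
proof -
  define g where "g = a \<bullet> p - a \<bullet> q"
  define s where "s = max 1 g"
  define w where "w = (1 - 1 / s) *\<^sub>R q + (1 / s) *\<^sub>R p"
  let ?c = "(1 - v) *\<^sub>R q + v *\<^sub>R p"
  have "\<alpha> \<le> a \<bullet> q"
    using above \<open>q \<in> K\<close> by blast
  have "a \<bullet> ?c = (1 - v) * (a \<bullet> q) + v * (a \<bullet> p)"
    by (simp add: inner_add_right)
  also have "\<dots> \<ge> (1 - v) * \<alpha> + v * (\<alpha> + 1)"
    using assms(7-9) \<open>\<alpha> \<le> a \<bullet> q\<close> by (intro add_mono mult_left_mono) auto
  finally have "v \<le> a \<bullet> ?c - \<alpha>"
    by (simp add: algebra_simps)
  have "v * g \<le> a \<bullet> ?c - \<alpha>"
    using \<open>\<alpha> \<le> a \<bullet> q\<close> by (simp add: g_def algebra_simps)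
  with \<open>v \<le> a \<bullet> ?c - \<alpha>\<close> have "v * s \<le> a \<bullet> ?c - \<alpha>"
    by (simp add: s_def max_def)
  \<comment> \<open>w is p, or the point of [q, p] one unit above q; either way it lies in the bounded slab.\<close>
  have "1 \<le> s" "g \<le> s"
    by (auto simp: s_def)
  then have "w \<in> K"
    unfolding w_def by (intro convexD_alt[OF \<open>convex K\<close> \<open>q \<in> K\<close> \<open>p \<in> K\<close>]) auto
  moreover have "a \<bullet> w = a \<bullet> q + g / s"
    using \<open>1 \<le> s\<close> by (simp add: w_def g_def inner_add_right field_simps)
  moreover have "g / s \<le> 1"
    using \<open>1 \<le> s\<close> \<open>g \<le> s\<close> by simp
  ultimately have "norm w \<le> R"
    using slab assms(6) by force
  moreover have "norm q \<le> R"
    using slab \<open>q \<in> K\<close> assms(6) by force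
  ultimately have "norm (w - q) \<le> 2 * R"
    using norm_triangle_ineq4[of w q] by linarith
  have "?c - q = (v * s) *\<^sub>R (w - q)"
    using \<open>1 \<le> s\<close> by (simp add: w_def algebra_simps)
  then have "norm (?c - q) = (v * s) * norm (w - q)"
    using \<open>1 \<le> s\<close> assms(8) by simp
  also have "\<dots> \<le> (a \<bullet> ?c - \<alpha>) * (2 * R)"
    using \<open>v * s \<le> a \<bullet> ?c - \<alpha>\<close> \<open>v \<le> a \<bullet> ?c - \<alpha>\<close> \<open>norm (w - q) \<le> 2 * R\<close> \<open>1 \<le> s\<close> assms(8)
    by (intro mult_mono) auto
  finally show ?thesis
    by (simp add: mult_ac)
qed

lemma convex_hull_point_near_lower_part:
  fixes F K :: "'a::euclidean_space set"
  assumes "convex K" "F \<subseteq> K" and above: "\<And>y. y \<in> K \<Longrightarrow> \<alpha> \<le> a \<bullet> y"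
    and slab: "\<And>y. y \<in> K \<Longrightarrow> a \<bullet> y \<le> \<alpha> + 2 \<Longrightarrow> norm y \<le> R"
    and c: "c \<in> convex hull F" "a \<bullet> c \<le> \<alpha> + 1"
  shows "\<exists>q \<in> convex hull (F \<inter> {y. a \<bullet> y \<le> \<alpha> + 1}). dist c q \<le> 2 * R * (a \<bullet> c - \<alpha>)"
proof -
  define N where "N = F \<inter> {y. a \<bullet> y \<le> \<alpha> + 1}"
  define P where "P = F \<inter> {y. a \<bullet> y > \<alpha> + 1}"
  have "F = N \<union> P"
    by (auto simp: N_def P_def)
  have "c \<in> K"
    using c(1) hull_minimal[of F K convex] assms(1,2) by blast
  have hull_N: "convex hull N \<subseteq> K \<inter> {y. a \<bullet> y \<le> \<alpha> + 1}"
    using assms(2) by (intro hull_minimal convex_Int assms(1) convex_halfspace_le) (auto simp: N_def)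
  have hull_P: "convex hull P \<subseteq> K \<inter> {y. a \<bullet> y > \<alpha> + 1}"
    using assms(2) by (intro hull_minimal convex_Int assms(1) convex_halfspace_gt) (auto simp: P_def)
  consider "P = {}" | "N = {}" | "N \<noteq> {}" "P \<noteq> {}"
    by blast
  then show ?thesis
  proof cases
    case 1
    have "0 \<le> R"
      using slab[OF \<open>c \<in> K\<close>] c(2) norm_ge_zero[of c] by linarith
    moreover have "c \<in> convex hull N"
      using 1 c(1) \<open>F = N \<union> P\<close> by simp
    ultimately show ?thesis
      using above[OF \<open>c \<in> K\<close>] unfolding N_def by (intro bexI[of _ c]) auto
  next
    case 2
    then have "c \<in> convex hull P"
      using c(1) \<open>F = N \<union> P\<close> by simp
    then show ?thesis
      using c(2) hull_P by auto
  next
    case 3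
    have "c \<in> convex hull (convex hull N \<union> convex hull P)"
      using c(1) \<open>F = N \<union> P\<close> by (metis hull_Un_left hull_Un_right)
    then obtain u v q p where "0 \<le> u" "0 \<le> v" "u + v = 1" "q \<in> convex hull N" "p \<in> convex hull P"
      and "c = u *\<^sub>R q + v *\<^sub>R p"
      using 3 by (auto simp: convex_hull_union_two)
    then have "c = (1 - v) *\<^sub>R q + v *\<^sub>R p" "v \<le> 1"
      by (auto simp: eq_diff_eq)
    moreover have "q \<in> K" "a \<bullet> q \<le> \<alpha> + 1" "p \<in> K" "\<alpha> + 1 < a \<bullet> p"
      using \<open>q \<in> convex hull N\<close> \<open>p \<in> convex hull P\<close> hull_N hull_P by auto
    ultimately have "dist c q \<le> 2 * R * (a \<bullet> c - \<alpha>)"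
      using segment_point_near_lower_end[OF \<open>convex K\<close> above slab] \<open>0 \<le> v\<close>
      by (simp add: dist_norm)
    then show ?thesis
      using \<open>q \<in> convex hull N\<close> unfolding N_def by blast
  qed
qed

lemma frontier_contains_ray_if_unbounded_slab:
  fixes C :: "'a::euclidean_space set"
  assumes "convex C" "x \<in> closure C" "a \<noteq> 0"
    and support: "\<And>y. y \<in> closure C \<Longrightarrow> a \<bullet> x \<le> a \<bullet> y"
    and "\<not> bounded (closure C \<inter> {y. a \<bullet> y \<le> \<beta>})"
  shows "\<exists>R. is_ray R \<and> R \<subseteq> frontier C"
proof -
  obtain e where "e \<noteq> 0" "a \<bullet> e = 0" and ray: "\<And>t. t \<ge> 0 \<Longrightarrow> x + t *\<^sub>R e \<in> closure C"
    using supporting_hyperplane_contains_ray[OF closed_closure convex_closure[OF \<open>convex C\<close>]]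
      assms(2,4,5) by metis
  have "x + t *\<^sub>R e \<in> frontier C" if "t \<ge> 0" for t
  proof -
    have "a \<bullet> (x + t *\<^sub>R e) = a \<bullet> x"
      using \<open>a \<bullet> e = 0\<close> by (simp add: inner_add_right)
    then have "x + t *\<^sub>R e \<notin> interior C"
      using support closure_subset by (intro not_in_interior_if_minimizes_inner[OF \<open>a \<noteq> 0\<close>]) auto
    then show ?thesis
      using ray[OF that] by (simp add: frontier_def)
  qed
  moreover have "is_ray {x + t *\<^sub>R e | t. t \<ge> 0}"
    using \<open>e \<noteq> 0\<close> unfolding is_ray_def by blast
  ultimately show ?thesis
    by blast
qed

lemma closure_point_in_convex_hull_if_bounded_slabs:
  fixes F :: "'a::euclidean_space set"
  assumes "closed F" "x \<in> closure (convex hull F)"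
    and support: "\<And>y. y \<in> closure (convex hull F) \<Longrightarrow> a \<bullet> x \<le> a \<bullet> y"
    and slabs: "\<And>\<beta>. bounded (closure (convex hull F) \<inter> {y. a \<bullet> y \<le> \<beta>})"
  shows "x \<in> convex hull F"
proof -
  define \<alpha> where "\<alpha> = a \<bullet> x"
  define K where "K = closure (convex hull F)"
  define D where "D = convex hull (F \<inter> {y. a \<bullet> y \<le> \<alpha> + 1})"
  have "convex K"
    by (simp add: K_def convex_closure)
  have "F \<subseteq> K"
    unfolding K_def using hull_subset closure_subset by (rule order_trans)
  have above: "\<And>y. y \<in> K \<Longrightarrow> \<alpha> \<le> a \<bullet> y"
    using support unfolding K_def \<alpha>_def by blast
  obtain R where "\<forall>y \<in> K \<inter> {y. a \<bullet> y \<le> \<alpha> + 2}. norm y \<le> R"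
    using slabs[of "\<alpha> + 2"] unfolding bounded_iff K_def by (elim exE)
  then have R: "\<And>y. y \<in> K \<Longrightarrow> a \<bullet> y \<le> \<alpha> + 2 \<Longrightarrow> norm y \<le> R"
    by simp
  have "bounded (F \<inter> {y. a \<bullet> y \<le> \<alpha> + 1})"
    using \<open>F \<subseteq> K\<close> by (intro bounded_subset[OF slabs[of "\<alpha> + 1"]]) (auto simp: K_def)
  moreover have "closed (F \<inter> {y. a \<bullet> y \<le> \<alpha> + 1})"
    using \<open>closed F\<close> by (simp add: closed_Int closed_halfspace_le)
  ultimately have "closed D"
    unfolding D_def by (intro compact_imp_closed compact_convex_hull) (simp add: compact_eq_bounded_closed)
  have near: "infdist c D \<le> 2 * R * (a \<bullet> c - \<alpha>)" and nonempty: "D \<noteq> {}"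
    if c: "c \<in> convex hull F \<inter> {y. a \<bullet> y < \<alpha> + 1}" for c
  proof -
    obtain q where "q \<in> D" "dist c q \<le> 2 * R * (a \<bullet> c - \<alpha>)"
      using convex_hull_point_near_lower_part[OF \<open>convex K\<close> \<open>F \<subseteq> K\<close> above R, of c] c
      unfolding D_def by auto
    then show "infdist c D \<le> 2 * R * (a \<bullet> c - \<alpha>)" "D \<noteq> {}"
      by (auto intro: infdist_le2)
  qed
  have x_lower: "x \<in> closure (convex hull F \<inter> {y. a \<bullet> y < \<alpha> + 1})"
    using open_Int_closure_subset[OF open_halfspace_lt, of a "\<alpha> + 1" "convex hull F"] assms(2)
    unfolding \<alpha>_def by (auto simp: Int_commute)
  then have "convex hull F \<inter> {y. a \<bullet> y < \<alpha> + 1} \<noteq> {}"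
    by auto
  then have "D \<noteq> {}"
    using nonempty by blast
  \<comment> \<open>The estimate passes to the limit point x, where its right-hand side vanishes.\<close>
  have "closure (convex hull F \<inter> {y. a \<bullet> y < \<alpha> + 1}) \<subseteq> {y. infdist y D \<le> 2 * R * (a \<bullet> y - \<alpha>)}"
    using near by (intro closure_minimal closed_Collect_le continuous_intros) auto
  with x_lower have "infdist x D \<le> 0"
    by (auto simp: \<alpha>_def)
  then have "infdist x D = 0"
    using infdist_nonneg[of x D] by linarith
  then have "x \<in> D"
    using \<open>closed D\<close> \<open>D \<noteq> {}\<close> in_closure_iff_infdist_zero[of D x] by simp
  moreover have "D \<subseteq> convex hull F"
    unfolding D_def by (intro hull_mono) blast
  ultimately show ?thesis
    by blast
qed

theorem mainTheorem4:
  fixes F :: "'a::euclidean_space set"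
  assumes "closed F"
    and "\<not> (\<exists>R. is_ray R \<and> R \<subseteq> frontier (convex hull F))"
  shows "closure (convex hull F) = convex hull F"
proof (rule subset_antisym[OF subsetI closure_subset])
  fix x
  assume x: "x \<in> closure (convex hull F)"
  show "x \<in> convex hull F"
  proof (cases "x \<in> rel_interior (convex hull F)")
    case True
    then show ?thesis
      using rel_interior_subset by blast
  next
    case False
    obtain a where "a \<noteq> 0" and support: "\<And>y. y \<in> closure (convex hull F) \<Longrightarrow> a \<bullet> x \<le> a \<bullet> y"
      by (rule supporting_hyperplane_relative_frontier[OF convex_convex_hull x False]) (rule that)
    show ?thesis
    proof (rule closure_point_in_convex_hull_if_bounded_slabs[OF assms(1) x support])
      show "bounded (closure (convex hull F) \<inter> {y. a \<bullet> y \<le> \<beta>})" for \<beta>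
      proof (rule ccontr)
        assume "\<not> bounded (closure (convex hull F) \<inter> {y. a \<bullet> y \<le> \<beta>})"
        from frontier_contains_ray_if_unbounded_slab[OF convex_convex_hull x \<open>a \<noteq> 0\<close> support this]
        show False
          by (rule notE[OF assms(2)])
      qed
    qed
  qed
qed

end
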